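(* Let $\mathbf w=\mathbf v_1a\mathbf v_2a\mathbf v_3$ where $a$ is a letter and $\mathbf v_1,\mathbf v_2,\mathbf v_3$ are possibly empty words. Suppose that $a$ occurs in $\mathbf v_1$ and that every letter occurring in $\mathbf v_2$ occurs at least twice in $\mathbf w$. Then the variety $\mathbf O$ satisfies the identity $\mathbf w\approx\mathbf v_1\mathbf v_2a\mathbf v_3$.
   Context: Words are elements of the free monoid over a countably infinite alphabet. $\mathbf O$ is the monoid variety defined by the identities $x^2y^2\approx y^2x^2$ and $xzxyxty\approx xzyxty$. *)

theory Defs
  imports Main
begin

text \<open>Words over a countably infinite alphabet: lists of naturals.
  A word is interpreted in a monoid via an assignment of letters to elements.\<close>

definition word_eval :: "(nat \<Rightarrow> 'm::monoid_mult) \<Rightarrow> nat list \<Rightarrow> 'm" where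
  "word_eval \<sigma> w = prod_list (map \<sigma> w)"

definition ident_holds :: "'m::monoid_mult itself \<Rightarrow> nat list \<Rightarrow> nat list \<Rightarrow> bool" where
  "ident_holds _ u v \<longleftrightarrow> (\<forall>\<sigma>::nat \<Rightarrow> 'm. word_eval \<sigma> u = word_eval \<sigma> v)"

text \<open>Membership in the variety O: letters x=0, y=1, z=2, t=3;
  identities x^2y^2 = y^2x^2 and xzxyxty = xzyxty.\<close>
definition in_O :: "'m::monoid_mult itself \<Rightarrow> bool" where
  "in_O T \<longleftrightarrow> ident_holds T [0,0,1,1] [1,1,0,0]
             \<and> ident_holds T [0,2,0,1,0,3,1] [0,2,1,0,3,1]"

end

theory Submission
  imports Defs
begin

text \<open>In \<open>\<^bold>O\<close> a letter that has already occurred may be doubled (\<open>xzx \<approx> xzxx\<close>), so two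
  adjacent letters that have both occurred earlier commute, by \<open>x\<^sup>2y\<^sup>2 \<approx> y\<^sup>2x\<^sup>2\<close>.
  The second \<open>a\<close> is moved leftwards across \<open>\<^bold>v\<^sub>2\<close> one letter \<open>c\<close> at a time, from the right.
  If \<open>c\<close> occurred before, \<open>a\<close> and \<open>c\<close> are swapped. Otherwise \<open>c\<close> occurs again in \<open>\<^bold>v\<^sub>3\<close>, and
  \<open>xzxyxty \<approx> xzyxty\<close> lets us insert an extra \<open>a\<close> in front of \<open>c\<close> before the move and remove
  it after.\<close>

lemma word_eval_Nil [simp]: "word_eval \<sigma> [] = 1"
  by (simp add: word_eval_def)

lemma word_eval_Cons [simp]: "word_eval \<sigma> (x # w) = \<sigma> x * word_eval \<sigma> w"
  by (simp add: word_eval_def)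

lemma word_eval_append [simp]: "word_eval \<sigma> (u @ v) = word_eval \<sigma> u * word_eval \<sigma> v"
  by (simp add: word_eval_def)

lemma in_O_squares_commute:
  assumes "in_O TYPE('m::monoid_mult)"
  shows "(x::'m) * x * (y * y) = y * y * (x * x)"
proof -
  have "word_eval (\<lambda>n. if n = 0 then x else y) [0,0,1,1]
      = word_eval (\<lambda>n. if n = 0 then x else y) [1,1,0,0]"
    using assms unfolding in_O_def ident_holds_def by blast
  then show ?thesis by (simp add: mult.assoc)
qed

lemma in_O_xzxyxty:
  assumes "in_O TYPE('m::monoid_mult)"
  shows "(x::'m) * z * x * y * x * t * y = x * z * y * x * t * y"
proof -
  let ?\<sigma> = "\<lambda>n::nat. if n = 0 then x else if n = 1 then y else if n = 2 then z else t"
  have "word_eval ?\<sigma> [0,2,0,1,0,3,1] = word_eval ?\<sigma> [0,2,1,0,3,1]"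
    using assms unfolding in_O_def ident_holds_def by blast
  then show ?thesis by (simp add: mult.assoc)
qed

lemma in_O_xzxx:
  assumes "in_O TYPE('m::monoid_mult)"
  shows "(x::'m) * z * x * x = x * z * x"
  using in_O_xzxyxty [OF assms, of x z 1 1] by simp

lemma word_eval_double_letter:
  assumes "in_O TYPE('m::monoid_mult)" and "x \<in> set u"
  shows "word_eval (\<sigma>::nat \<Rightarrow> 'm) u * \<sigma> x * \<sigma> x = word_eval \<sigma> u * \<sigma> x"
proof -
  obtain p q where u: "u = p @ x # q"
    using assms(2) by (meson split_list)
  have "\<sigma> x * word_eval \<sigma> q * \<sigma> x * \<sigma> x = \<sigma> x * word_eval \<sigma> q * \<sigma> x"
    using in_O_xzxx [OF assms(1)] .
  then show ?thesis
    by (simp add: u mult.assoc)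
qed

lemma word_eval_swap_letters:
  assumes O: "in_O TYPE('m::monoid_mult)" and x: "x \<in> set u" and y: "y \<in> set u"
  shows "word_eval (\<sigma>::nat \<Rightarrow> 'm) (u @ x # y # v) = word_eval \<sigma> (u @ y # x # v)"
proof -
  let ?u = "word_eval \<sigma> u"
  have "?u * \<sigma> x * \<sigma> y = ?u * \<sigma> x * \<sigma> x * \<sigma> y * \<sigma> y"
    using word_eval_double_letter [OF O x, of \<sigma>]
      word_eval_double_letter [OF O, of y "u @ [x, x]" \<sigma>] y
    by (simp add: mult.assoc [symmetric])
  also have "\<dots> = ?u * (\<sigma> y * \<sigma> y * (\<sigma> x * \<sigma> x))"
    using in_O_squares_commute [OF O, of "\<sigma> x" "\<sigma> y"] by (simp add: mult.assoc)
  also have "\<dots> = ?u * \<sigma> y * \<sigma> x"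
    using word_eval_double_letter [OF O y, of \<sigma>]
      word_eval_double_letter [OF O, of x "u @ [y]" \<sigma>] x
    by (simp add: mult.assoc [symmetric])
  finally have "?u * \<sigma> x * \<sigma> y = ?u * \<sigma> y * \<sigma> x" .
  then show ?thesis
    by (simp add: mult.assoc [symmetric])
qed

lemma word_eval_xzxyxty:
  assumes "in_O TYPE('m::monoid_mult)"
  shows "word_eval (\<sigma>::nat \<Rightarrow> 'm) (p @ a # z @ a # c # a # t @ c # w)
       = word_eval \<sigma> (p @ a # z @ c # a # t @ c # w)"
proof -
  have "\<sigma> a * word_eval \<sigma> z * \<sigma> a * \<sigma> c * \<sigma> a * word_eval \<sigma> t * \<sigma> c
      = \<sigma> a * word_eval \<sigma> z * \<sigma> c * \<sigma> a * word_eval \<sigma> t * \<sigma> c"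
    using in_O_xzxyxty [OF assms] .
  then have "word_eval \<sigma> p * (\<sigma> a * word_eval \<sigma> z * \<sigma> a * \<sigma> c * \<sigma> a * word_eval \<sigma> t * \<sigma> c)
      * word_eval \<sigma> w
      = word_eval \<sigma> p * (\<sigma> a * word_eval \<sigma> z * \<sigma> c * \<sigma> a * word_eval \<sigma> t * \<sigma> c)
      * word_eval \<sigma> w"
    by simp
  then show ?thesis
    by (simp add: mult.assoc)
qed

lemma word_eval_move_occurrence_left:
  assumes O: "in_O TYPE('m::monoid_mult)" and a: "a \<in> set v1"
    and twice: "\<forall>b \<in> set v2. count_list (v1 @ a # v2 @ a # v3) b \<ge> 2"
  shows "word_eval (\<sigma>::nat \<Rightarrow> 'm) (v1 @ a # v2 @ a # v3) = word_eval \<sigma> (v1 @ v2 @ a # v3)"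
  using twice
proof (induction v2 arbitrary: v3 rule: rev_induct)
  case Nil
  then show ?case
    using word_eval_double_letter [OF O a, of \<sigma>] by (simp add: mult.assoc [symmetric])
next
  case (snoc c u)
  have IH: "word_eval \<sigma> (v1 @ a # u @ a # c # w) = word_eval \<sigma> (v1 @ u @ a # c # w)"
    if "\<And>b. count_list v3 b \<le> count_list w b" for w
  proof (rule snoc.IH, intro ballI)
    fix b
    assume "b \<in> set u"
    then have "2 \<le> count_list (v1 @ a # (u @ [c]) @ a # v3) b"
      using snoc.prems by simp
    also have "\<dots> \<le> count_list (v1 @ a # u @ a # c # w) b"
      using that [of b] by simp
    finally show "2 \<le> count_list (v1 @ a # u @ a # c # w) b" .
  qed
  show ?case
  proof (cases "c \<in> set (v1 @ u)")
    case True
    have "word_eval \<sigma> (v1 @ a # (u @ [c]) @ a # v3) = word_eval \<sigma> (v1 @ a # u @ a # c # v3)"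
      using word_eval_swap_letters [OF O, of c "v1 @ a # u" a] True by simp
    also have "\<dots> = word_eval \<sigma> (v1 @ u @ a # c # v3)"
      using IH [of v3] by simp
    also have "\<dots> = word_eval \<sigma> (v1 @ (u @ [c]) @ a # v3)"
      using word_eval_swap_letters [OF O, of a "v1 @ u" c] True a by simp
    finally show ?thesis .
  next
    case False
    with a have "c \<noteq> a" by auto
    with False snoc.prems have "count_list v3 c \<ge> 1"
      by (simp add: count_list_0_iff)
    then have "c \<in> set v3"
      by (metis count_list_0_iff not_one_le_zero)
    then obtain t w where v3: "v3 = t @ c # w"
      by (meson split_list)
    obtain p q where v1: "v1 = p @ a # q"
      using a by (meson split_list)
    have "word_eval \<sigma> (v1 @ a # (u @ [c]) @ a # v3) = word_eval \<sigma> (v1 @ a # u @ a # c # a # v3)"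
      using word_eval_xzxyxty [OF O, of \<sigma> p a "q @ a # u" c t w] by (simp add: v1 v3)
    also have "\<dots> = word_eval \<sigma> (v1 @ u @ a # c # a # v3)"
      using IH [of "a # v3"] by simp
    also have "\<dots> = word_eval \<sigma> (v1 @ (u @ [c]) @ a # v3)"
      using word_eval_xzxyxty [OF O, of \<sigma> p a "q @ u" c t w] by (simp add: v1 v3)
    finally show ?thesis .
  qed
qed

theorem lemma3p3:
  fixes v1 v2 v3 :: "nat list" and a :: nat
  assumes "a \<in> set v1"
    and "\<forall>b \<in> set v2. count_list (v1 @ a # v2 @ a # v3) b \<ge> 2"
    and "in_O TYPE('m::monoid_mult)"
  shows "ident_holds TYPE('m) (v1 @ a # v2 @ a # v3) (v1 @ v2 @ a # v3)"
  unfolding ident_holds_def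
  using word_eval_move_occurrence_left [OF assms(3,1,2)] by blast

end
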